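(* Let $\tilde w:\mathcal D^n(\delta)\to\mathcal D^n(\delta)$ and let $C\subset\mathcal D^n(\delta)$ be nonempty with $\tilde w(C)\subset C$. Let $\{\Lambda_\alpha\}_{\alpha\in\mathcal I}$ be the (possibly uncountable) family of all absorbing sets for $\tilde w$ in $C$. Then $\mathcal M:=\bigcap_{\alpha\in\mathcal I}\Lambda_\alpha$ is the set of all periodic points of $\tilde w$ in $C$, and hence $\mathcal M=\tilde w(\mathcal M)$.
   Context: $\mathcal D^n(\delta)=\{\delta m:m\in\mathbb Z^n\}\subset\mathbb R^n$ for fixed $\delta>0$. For a map $\tilde w$ and nonempty $C$ with $\tilde w(C)\subset C$, a set $\Lambda\subset C$ is an absorbing set for $\tilde w$ in $C$ if for every $\tilde x\in C$ there is $N\in\mathbb N$ with $\tilde w^{\circ i}(\tilde x)\in\Lambda$ for all $i\ge N$. A point $\tilde x$ is periodic if $\tilde w^{\circ k}(\tilde x)=\tilde x$ for some integer $k\ge1$. *)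

theory Defs
  imports "HOL-Analysis.Analysis"
begin

definition lattice :: "real \<Rightarrow> (real ^ 'n) set" where
  "lattice \<delta> = {x. \<forall>i. \<exists>m::int. x $ i = \<delta> * of_int m}"

text \<open>Absorbing set for w in C (C assumed forward invariant separately).\<close>
definition absorbing :: "('a \<Rightarrow> 'a) \<Rightarrow> 'a set \<Rightarrow> 'a set \<Rightarrow> bool" where
  "absorbing w C \<Lambda> \<longleftrightarrow> \<Lambda> \<subseteq> C \<and>
     (\<forall>x\<in>C. \<exists>N::nat. \<forall>i\<ge>N. (w ^^ i) x \<in> \<Lambda>)"

definition periodic_point :: "('a \<Rightarrow> 'a) \<Rightarrow> 'a \<Rightarrow> bool" where
  "periodic_point w x \<longleftrightarrow> (\<exists>k::nat. k \<ge> 1 \<and> (w ^^ k) x = x)"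

end

theory Submission
  imports Defs
begin

text \<open>
  A periodic orbit returns to each of its points at arbitrarily late times, so every absorbing
  set contains all periodic points of \<open>C\<close>. Conversely, an orbit meets a non-periodic point \<open>x\<close>
  at most once, so \<open>C - {x}\<close> is absorbing. Finally \<open>w\<close> permutes each periodic orbit, hence maps
  the periodic points onto themselves.
\<close>

lemma funpow_mem_invariant:
  assumes "w ` C \<subseteq> C" "x \<in> C"
  shows "(w ^^ i) x \<in> C"
  using assms by (induction i) auto

lemma absorbing_self:
  assumes "w ` C \<subseteq> C"
  shows "absorbing w C C"
  using funpow_mem_invariant[OF assms] unfolding absorbing_def by blast

lemma periodic_point_mem_absorbing:
  assumes "absorbing w C \<Lambda>" "x \<in> C" "periodic_point w x"
  shows "x \<in> \<Lambda>"
proof -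
  obtain k where "k \<ge> 1" and period: "(w ^^ k) x = x"
    using assms(3) unfolding periodic_point_def by blast
  obtain N where N: "\<forall>i\<ge>N. (w ^^ i) x \<in> \<Lambda>"
    using assms(1,2) unfolding absorbing_def by blast
  have "(w ^^ (k * N)) x = x"
    using funpow_mod_eq[where f = w and n = k and m = "k * N", OF period] by simp
  moreover have "k * N \<ge> N"
    using \<open>k \<ge> 1\<close> by simp
  ultimately show ?thesis
    using N by metis
qed

lemma absorbing_Diff_non_periodic_point:
  assumes "w ` C \<subseteq> C" "\<not> periodic_point w x"
  shows "absorbing w C (C - {x})"
  unfolding absorbing_def
proof (intro conjI ballI)
  fix y assume "y \<in> C"
  show "\<exists>N. \<forall>i\<ge>N. (w ^^ i) y \<in> C - {x}"
  proof (cases "\<exists>n. (w ^^ n) y = x")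
    case False
    then show ?thesis
      using funpow_mem_invariant[OF assms(1) \<open>y \<in> C\<close>] by blast
  next
    case True
    then obtain n where hit: "(w ^^ n) y = x" by blast
    have "(w ^^ i) y \<noteq> x" if "i > n" for i
    proof
      assume "(w ^^ i) y = x"
      moreover have "(w ^^ i) y = (w ^^ (i - n)) x"
        using \<open>i > n\<close> hit funpow_add[where f = w and m = "i - n" and n = n] by simp
      ultimately have "(w ^^ (i - n)) x = x" by simp
      then show False
        using assms(2) \<open>i > n\<close> unfolding periodic_point_def by simp
    qed
    then show ?thesis
      using funpow_mem_invariant[OF assms(1) \<open>y \<in> C\<close>] by (intro exI[of _ "Suc n"]) auto
  qed
qed auto

lemma Inter_absorbing_eq_periodic_points:
  assumes "w ` C \<subseteq> C"
  shows "\<Inter> {\<Lambda>. absorbing w C \<Lambda>} = {x \<in> C. periodic_point w x}"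
proof (intro equalityI subsetI)
  fix x assume x: "x \<in> \<Inter> {\<Lambda>. absorbing w C \<Lambda>}"
  have "x \<in> C"
    using x absorbing_self[OF assms] by (rule InterD[OF _ CollectI])
  moreover have "periodic_point w x"
  proof (rule ccontr)
    assume "\<not> periodic_point w x"
    then have "absorbing w C (C - {x})"
      by (rule absorbing_Diff_non_periodic_point[OF assms])
    with x have "x \<in> C - {x}"
      by (rule InterD[OF _ CollectI])
    then show False by simp
  qed
  ultimately show "x \<in> {x \<in> C. periodic_point w x}" by simp
next
  fix x assume "x \<in> {x \<in> C. periodic_point w x}"
  then show "x \<in> \<Inter> {\<Lambda>. absorbing w C \<Lambda>}"
    using periodic_point_mem_absorbing by auto
qed

lemma periodic_point_image:
  assumes "periodic_point w x"
  shows "periodic_point w (w x)"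
  using assms funpow_swap1[where f = w and x = x] unfolding periodic_point_def by metis

lemma periodic_point_has_periodic_preimage:
  assumes "periodic_point w x"
  obtains z where "w z = x" "periodic_point w z" "z \<in> range (\<lambda>i. (w ^^ i) x)"
proof -
  obtain k where "k \<ge> 1" and period: "(w ^^ k) x = x"
    using assms unfolding periodic_point_def by blast
  define z where "z = (w ^^ (k - 1)) x"
  have "w z = (w ^^ Suc (k - 1)) x"
    by (simp add: z_def)
  also have "Suc (k - 1) = k"
    using \<open>k \<ge> 1\<close> by simp
  finally have "w z = x"
    using period by simp
  moreover have "(w ^^ k) z = (w ^^ (k - 1)) ((w ^^ k) x)"
    unfolding z_def by (metis add.commute comp_apply funpow_add)
  then have "(w ^^ k) z = z"
    using period by (simp add: z_def)
  ultimately show ?thesis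
    using \<open>k \<ge> 1\<close> that unfolding periodic_point_def z_def by blast
qed

lemma image_periodic_points:
  assumes "w ` C \<subseteq> C"
  shows "w ` {x \<in> C. periodic_point w x} = {x \<in> C. periodic_point w x}"
proof (intro equalityI subsetI)
  fix y assume "y \<in> w ` {x \<in> C. periodic_point w x}"
  then obtain x where "x \<in> C" "periodic_point w x" "y = w x" by blast
  with assms show "y \<in> {x \<in> C. periodic_point w x}"
    using periodic_point_image[of w x] by blast
next
  fix x assume x: "x \<in> {x \<in> C. periodic_point w x}"
  then have "periodic_point w x" by simp
  then obtain z where "w z = x" "periodic_point w z" and orbit: "z \<in> range (\<lambda>i. (w ^^ i) x)"
    by (rule periodic_point_has_periodic_preimage)
  from orbit obtain i where "z = (w ^^ i) x" ..
  with x have "z \<in> C"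
    using funpow_mem_invariant[OF assms] by simp
  with \<open>periodic_point w z\<close> have "z \<in> {x \<in> C. periodic_point w x}" by simp
  with \<open>w z = x\<close> show "x \<in> w ` {x \<in> C. periodic_point w x}"
    by (rule image_eqI[OF sym])
qed

theorem theorem2:
  fixes w :: "real ^ 'n \<Rightarrow> real ^ 'n" and \<delta> :: real and C :: "(real ^ 'n) set"
  assumes "\<delta> > 0"
    and "w ` lattice \<delta> \<subseteq> lattice \<delta>"
    and "C \<subseteq> lattice \<delta>" and "C \<noteq> {}" and "w ` C \<subseteq> C"
  shows "\<Inter> {\<Lambda>. absorbing w C \<Lambda>} = {x \<in> C. periodic_point w x}
     \<and> w ` (\<Inter> {\<Lambda>. absorbing w C \<Lambda>}) = \<Inter> {\<Lambda>. absorbing w C \<Lambda>}"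
  using Inter_absorbing_eq_periodic_points[OF assms(5)] image_periodic_points[OF assms(5)]
  by simp

end
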